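(* Let $\mathcal H,\mathcal L$ be Hilbert spaces, $\mathcal A=\bigcup_i\mathcal A_i\subset\mathcal H$ a closed proximal union of linear subspaces, and $\Phi:\mathcal H\to\mathcal L$ a bounded linear operator that is bi-Lipschitz on $\mathcal A$ with constants $0<\alpha\le\beta$. Let $\mu>0$ satisfy $\beta\le 1/\mu<1.5\,\alpha$ and $\mu\alpha<1$. Let $x\in\mathcal H$ be arbitrary, $e\in\mathcal L$, $y=\Phi x+e$, $x_{\mathcal A}\in p_{\mathcal A}(x)$, and $e_{\mathcal A}=y-\Phi x_{\mathcal A}=\Phi(x-x_{\mathcal A})+e$. Consider the Iterative Projection Algorithm: $x^0=0$ and $x^{n+1}\in p_{\mathcal A}\big(x^n+\mu\Phi^*(y-\Phi x^n)\big)$ (any choice of element). Assume $x_{\mathcal A}\neq0$, $e_{\mathcal A}\ne0$, and let $\delta>0$ with $\delta\|e_{\mathcal A}\|<\|x_{\mathcal A}\|$. Then after $$n^\star=\left\lceil 2\,\frac{\ln\!\big(\delta\|e_{\mathcal A}\|/\|x_{\mathcal A}\|\big)}{\ln\!\big(2/(\mu\alpha)-2\big)}\right\rceil$$ iterations, $$\|x-x^{n^\star}\|\le\big(c^{1/2}+\delta\big)\|e_{\mathcal A}\|+\|x_{\mathcal A}-x\|,\qquad c=\frac{4}{3\alpha-2/\mu}.$$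
   Context: $\Phi^*$ is the adjoint of $\Phi$. A set $\mathcal B$ is proximal if for every $w$ the set $p_{\mathcal B}(w)=\{\tilde w\in\mathcal B:\|\tilde w-w\|=\inf_{\hat w\in\mathcal B}\|\hat w-w\|\}$ is nonempty. $\Phi$ is bi-Lipschitz on $\mathcal A$ with constants $0<\alpha\le\beta$ if for all $x_1,x_2\in\mathcal A$: $\alpha\|x_1-x_2\|^2\le\|\Phi(x_1-x_2)\|^2\le\beta\|x_1-x_2\|^2$. *)

theory Defs
  imports "HOL-Analysis.Analysis"
begin

definition proj_set :: "'a::real_normed_vector set \<Rightarrow> 'a \<Rightarrow> 'a set" where
  "proj_set B w = {w' \<in> B. norm (w' - w) = (INF b\<in>B. norm (b - w))}"

definition proximal :: "'a::real_normed_vector set \<Rightarrow> bool" where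
  "proximal B \<longleftrightarrow> (\<forall>w. proj_set B w \<noteq> {})"

definition bi_lipschitz_on ::
  "('a::real_normed_vector \<Rightarrow> 'b::real_normed_vector) \<Rightarrow> 'a set \<Rightarrow> real \<Rightarrow> real \<Rightarrow> bool" where
  "bi_lipschitz_on \<Phi> A \<alpha> \<beta> \<longleftrightarrow>
     (\<forall>x1\<in>A. \<forall>x2\<in>A. \<alpha> * (norm (x1 - x2))^2 \<le> (norm (\<Phi> (x1 - x2)))^2
                    \<and> (norm (\<Phi> (x1 - x2)))^2 \<le> \<beta> * (norm (x1 - x2))^2)"

end

theory Submission
  imports Defs
begin

(* The argument is majorization-minimization. For the current iterate u, the surrogate
     Q_u(w) = |y - Phi u|^2 - 2 <Phi (w - u), y - Phi u> + |w - u|^2 / mu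
   (i) equals |y - Phi w|^2 - |Phi (w - u)|^2 + |w - u|^2 / mu, so it majorizes the
   residual |y - Phi w|^2 whenever |Phi (w - u)|^2 <= |w - u|^2 / mu (here from beta <= 1/mu);
   (ii) differs from |w - a|^2 / mu by a constant, where a = u + mu Phi^* (y - Phi u) is the
   gradient step, so the IPA iterate v in p_A(a) minimizes Q_u over A.
   Comparing v with the best approximation xA gives |y - Phi v|^2 <= |eA|^2 + (1/mu - alpha) d,
   with d = |xA - u|^2; the lower Lipschitz bound turns this into the contraction
   d' <= r d + (4/alpha) |eA|^2 with r = 2/(mu alpha) - 2 < 1. Unrolling the recursion gives
   d_n <= r^n |xA|^2 + c |eA|^2; the choice of n* makes r^n* <= (delta |eA| / |xA|)^2, and a
   square root plus the triangle inequality yield the theorem. *)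

lemma proj_set_le:
  fixes B :: "'a::real_normed_vector set"
  assumes "v \<in> proj_set B a" "b \<in> B"
  shows "norm (v - a) \<le> norm (b - a)"
proof -
  have "norm (v - a) = (INF b\<in>B. norm (b - a))" using assms(1) by (simp add: proj_set_def)
  also have "\<dots> \<le> norm (b - a)"
    by (rule cINF_lower) (auto intro: bdd_belowI[where m=0] simp: assms(2))
  finally show ?thesis .
qed

lemma norm_diff_square:
  fixes p q :: "'a::real_inner"
  shows "(norm (p - q))\<^sup>2 = (norm p)\<^sup>2 - 2 * inner p q + (norm q)\<^sup>2"
  by (simp add: power2_norm_eq_inner inner_diff inner_commute)

definition surrogate :: "('a::real_inner \<Rightarrow> 'b::real_inner) \<Rightarrow> 'b \<Rightarrow> real \<Rightarrow> 'a \<Rightarrow> 'a \<Rightarrow> real" where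
  "surrogate \<Phi> y \<mu> u w =
     (norm (y - \<Phi> u))\<^sup>2 - 2 * inner (\<Phi> (w - u)) (y - \<Phi> u) + (norm (w - u))\<^sup>2 / \<mu>"

lemma surrogate_eq_residual:
  assumes "linear \<Phi>"
  shows "surrogate \<Phi> y \<mu> u w
           = (norm (y - \<Phi> w))\<^sup>2 - (norm (\<Phi> (w - u)))\<^sup>2 + (norm (w - u))\<^sup>2 / \<mu>"
proof -
  have split: "y - \<Phi> w = (y - \<Phi> u) - \<Phi> (w - u)" using assms by (simp add: linear_diff)
  have "(norm (y - \<Phi> w))\<^sup>2
           = (norm (y - \<Phi> u))\<^sup>2 - 2 * inner (y - \<Phi> u) (\<Phi> (w - u)) + (norm (\<Phi> (w - u)))\<^sup>2"
    unfolding split by (rule norm_diff_square)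
  thus ?thesis by (simp add: surrogate_def inner_commute)
qed

lemma surrogate_eq_gradient_step:
  assumes adj: "\<And>u v. inner (\<Phi> u) v = inner u (\<Phi>adj v)" and "\<mu> > 0"
  shows "surrogate \<Phi> y \<mu> u w
           = (norm (w - (u + \<mu> *\<^sub>R \<Phi>adj (y - \<Phi> u))))\<^sup>2 / \<mu>
             + (norm (y - \<Phi> u))\<^sup>2 - \<mu> * (norm (\<Phi>adj (y - \<Phi> u)))\<^sup>2"
proof -
  define g where "g = \<Phi>adj (y - \<Phi> u)"
  have split: "w - (u + \<mu> *\<^sub>R g) = (w - u) - \<mu> *\<^sub>R g" by simp
  have "(norm (w - (u + \<mu> *\<^sub>R g)))\<^sup>2
           = (norm (w - u))\<^sup>2 - 2 * inner (w - u) (\<mu> *\<^sub>R g) + (norm (\<mu> *\<^sub>R g))\<^sup>2"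
    unfolding split by (rule norm_diff_square)
  hence "(norm (w - (u + \<mu> *\<^sub>R g)))\<^sup>2
           = (norm (w - u))\<^sup>2 - 2 * \<mu> * inner (w - u) g + \<mu>\<^sup>2 * (norm g)\<^sup>2"
    using \<open>\<mu> > 0\<close> by (simp add: power_mult_distrib)
  moreover have "inner (\<Phi> (w - u)) (y - \<Phi> u) = inner (w - u) g" by (simp add: g_def adj)
  ultimately show ?thesis
    using \<open>\<mu> > 0\<close> by (simp add: surrogate_def g_def field_simps power2_eq_square)
qed

lemma surrogate_minimized_by_projection:
  assumes adj: "\<And>u v. inner (\<Phi> u) v = inner u (\<Phi>adj v)" and "\<mu> > 0"
    and v: "v \<in> proj_set A (u + \<mu> *\<^sub>R \<Phi>adj (y - \<Phi> u))" and z: "z \<in> A"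
  shows "surrogate \<Phi> y \<mu> u v \<le> surrogate \<Phi> y \<mu> u z"
proof -
  have "norm (v - (u + \<mu> *\<^sub>R \<Phi>adj (y - \<Phi> u))) \<le> norm (z - (u + \<mu> *\<^sub>R \<Phi>adj (y - \<Phi> u)))"
    by (rule proj_set_le[OF v z])
  hence "(norm (v - (u + \<mu> *\<^sub>R \<Phi>adj (y - \<Phi> u))))\<^sup>2 / \<mu>
           \<le> (norm (z - (u + \<mu> *\<^sub>R \<Phi>adj (y - \<Phi> u))))\<^sup>2 / \<mu>"
    using \<open>\<mu> > 0\<close> by (intro divide_right_mono power_mono) auto
  thus ?thesis using assms(1,2) by (simp add: surrogate_eq_gradient_step)
qed

lemma ipa_step_residual:
  assumes lin: "linear \<Phi>" and adj: "\<And>u v. inner (\<Phi> u) v = inner u (\<Phi>adj v)" and "\<mu> > 0"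
    and v: "v \<in> proj_set A (u + \<mu> *\<^sub>R \<Phi>adj (y - \<Phi> u))" and z: "z \<in> A"
    and upper: "(norm (\<Phi> (v - u)))\<^sup>2 \<le> (norm (v - u))\<^sup>2 / \<mu>"
    and lower: "\<alpha> * (norm (z - u))\<^sup>2 \<le> (norm (\<Phi> (z - u)))\<^sup>2"
  shows "(norm (y - \<Phi> v))\<^sup>2 \<le> (norm (y - \<Phi> z))\<^sup>2 + (1 / \<mu> - \<alpha>) * (norm (z - u))\<^sup>2"
proof -
  have "(norm (y - \<Phi> v))\<^sup>2 \<le> surrogate \<Phi> y \<mu> u v"
    using upper by (simp add: surrogate_eq_residual[OF lin])
  also have "\<dots> \<le> surrogate \<Phi> y \<mu> u z"
    by (rule surrogate_minimized_by_projection[OF adj \<open>\<mu> > 0\<close> v z])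
  also have "\<dots> \<le> (norm (y - \<Phi> z))\<^sup>2 + (1 / \<mu> - \<alpha>) * (norm (z - u))\<^sup>2"
    using lower by (simp add: surrogate_eq_residual[OF lin] algebra_simps)
  finally show ?thesis .
qed

lemma ipa_step_error:
  assumes lin: "linear \<Phi>" and adj: "\<And>u v. inner (\<Phi> u) v = inner u (\<Phi>adj v)"
    and bilip: "bi_lipschitz_on \<Phi> A \<alpha> \<beta>" and "0 < \<alpha>" and "0 < \<mu>" and "\<beta> \<le> 1 / \<mu>"
    and u: "u \<in> A" and v: "v \<in> proj_set A (u + \<mu> *\<^sub>R \<Phi>adj (y - \<Phi> u))" and z: "z \<in> A"
  shows "(norm (z - v))\<^sup>2 \<le> (2 / (\<mu> * \<alpha>) - 2) * (norm (z - u))\<^sup>2 + 4 / \<alpha> * (norm (y - \<Phi> z))\<^sup>2"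
proof -
  have vA: "v \<in> A" using v by (simp add: proj_set_def)
  have "(norm (\<Phi> (v - u)))\<^sup>2 \<le> \<beta> * (norm (v - u))\<^sup>2"
    using bilip vA u by (simp add: bi_lipschitz_on_def)
  also have "\<dots> \<le> (norm (v - u))\<^sup>2 / \<mu>"
    using mult_right_mono[OF \<open>\<beta> \<le> 1 / \<mu>\<close>, of "(norm (v - u))\<^sup>2"] by simp
  finally have upper: "(norm (\<Phi> (v - u)))\<^sup>2 \<le> (norm (v - u))\<^sup>2 / \<mu>" .
  have lower: "\<alpha> * (norm (z - w))\<^sup>2 \<le> (norm (\<Phi> (z - w)))\<^sup>2" if "w \<in> A" for w
    using bilip z that by (simp add: bi_lipschitz_on_def)
  have residual: "(norm (y - \<Phi> v))\<^sup>2 \<le> (norm (y - \<Phi> z))\<^sup>2 + (1 / \<mu> - \<alpha>) * (norm (z - u))\<^sup>2"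
    by (rule ipa_step_residual[OF lin adj \<open>0 < \<mu>\<close> v z upper lower[OF u]])
  have "\<Phi> (z - v) = (y - \<Phi> v) - (y - \<Phi> z)" using lin by (simp add: linear_diff)
  hence "norm (\<Phi> (z - v)) \<le> norm (y - \<Phi> v) + norm (y - \<Phi> z)" by (metis norm_triangle_ineq4)
  hence "(norm (\<Phi> (z - v)))\<^sup>2 \<le> (norm (y - \<Phi> v) + norm (y - \<Phi> z))\<^sup>2" by (simp add: power_mono)
  also have "\<dots> \<le> 2 * (norm (y - \<Phi> v))\<^sup>2 + 2 * (norm (y - \<Phi> z))\<^sup>2"
    by (smt (verit) power2_sum sum_squares_bound)
  finally have "\<alpha> * (norm (z - v))\<^sup>2
                  \<le> 4 * (norm (y - \<Phi> z))\<^sup>2 + 2 * (1 / \<mu> - \<alpha>) * (norm (z - u))\<^sup>2"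
    using lower[OF vA] residual by linarith
  thus ?thesis using \<open>0 < \<alpha>\<close> \<open>0 < \<mu>\<close> by (simp add: field_simps)
qed

lemma linear_recursion_bound:
  fixes d :: "nat \<Rightarrow> real"
  assumes step: "\<And>n. d (Suc n) \<le> r * d n + b" and "0 \<le> r" and "0 \<le> c" and "r * c + b \<le> c"
  shows "d n \<le> r ^ n * d 0 + c"
proof (induction n)
  case 0
  show ?case using \<open>0 \<le> c\<close> by simp
next
  case (Suc n)
  have "d (Suc n) \<le> r * d n + b" by (rule step)
  also have "\<dots> \<le> r * (r ^ n * d 0 + c) + b" using Suc \<open>0 \<le> r\<close> by (simp add: mult_left_mono)
  also have "\<dots> \<le> r ^ Suc n * d 0 + c" using \<open>r * c + b \<le> c\<close> by (simp add: algebra_simps)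
  finally show ?case .
qed

lemma power_nat_ceiling_log_le:
  fixes r s :: real
  assumes "0 < r" "r < 1" "0 < s"
  shows "r ^ nat \<lceil>ln s / ln r\<rceil> \<le> s"
proof -
  define t where "t = ln s / ln r"
  have "t \<le> real (nat \<lceil>t\<rceil>)" by linarith
  have "r ^ nat \<lceil>t\<rceil> = r powr real (nat \<lceil>t\<rceil>)" using assms by (simp add: powr_realpow)
  also have "\<dots> \<le> r powr t" using \<open>t \<le> real (nat \<lceil>t\<rceil>)\<close> assms by (simp add: powr_mono')
  also have "\<dots> = exp (ln s)" using assms by (simp add: powr_def t_def)
  finally show ?thesis using assms t_def by simp
qed

theorem theorem2:
  fixes \<Phi> :: "'a::{real_inner,complete_space} \<Rightarrow> 'b::{real_inner,complete_space}"
    and \<Phi>adj :: "'b \<Rightarrow> 'a"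
    and Ai :: "'i \<Rightarrow> 'a set" and A :: "'a set"
    and \<alpha> \<beta> \<mu> \<delta> :: real
    and x xA :: 'a and e y eA :: 'b
    and xs :: "nat \<Rightarrow> 'a"
  assumes subsp: "\<And>i. subspace (Ai i)"
    and A_def: "A = (\<Union>i. Ai i)"
    and A_closed: "closed A"
    and A_prox: "proximal A"
    and lin: "bounded_linear \<Phi>"
    and adj: "\<And>u v. inner (\<Phi> u) v = inner u (\<Phi>adj v)"
    and \<alpha>_pos: "0 < \<alpha>" and \<alpha>\<beta>: "\<alpha> \<le> \<beta>"
    and bilip: "bi_lipschitz_on \<Phi> A \<alpha> \<beta>"
    and \<mu>_pos: "0 < \<mu>" and \<mu>1: "\<beta> \<le> 1 / \<mu>" and \<mu>2: "1 / \<mu> < 1.5 * \<alpha>" and \<mu>3: "\<mu> * \<alpha> < 1"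
    and y_def: "y = \<Phi> x + e"
    and xA: "xA \<in> proj_set A x"
    and eA_def: "eA = y - \<Phi> xA"
    and xs0: "xs 0 = 0"
    and xsSuc: "\<And>n. xs (Suc n) \<in> proj_set A (xs n + \<mu> *\<^sub>R \<Phi>adj (y - \<Phi> (xs n)))"
    and xA_nz: "xA \<noteq> 0" and eA_nz: "eA \<noteq> 0"
    and \<delta>_pos: "0 < \<delta>" and \<delta>_small: "\<delta> * norm eA < norm xA"
  shows "norm (x - xs (nat \<lceil>2 * ln (\<delta> * norm eA / norm xA) / ln (2 / (\<mu> * \<alpha>) - 2)\<rceil>))
           \<le> (sqrt (4 / (3 * \<alpha> - 2 / \<mu>)) + \<delta>) * norm eA + norm (xA - x)"
proof -
  define r where "r = 2 / (\<mu> * \<alpha>) - 2"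
  define c where "c = 4 / (3 * \<alpha> - 2 / \<mu>)"
  define q where "q = \<delta> * norm eA / norm xA"
  define N where "N = nat \<lceil>ln (q\<^sup>2) / ln r\<rceil>"
  have r: "0 < r" "r < 1" using \<mu>2 \<mu>3 \<alpha>_pos \<mu>_pos by (simp_all add: r_def field_simps)
  have c: "0 < c" "r * c + 4 / \<alpha> = c"
    using \<mu>2 \<alpha>_pos \<mu>_pos by (simp_all add: c_def r_def field_simps)
  have q: "0 < q" "q * norm xA = \<delta> * norm eA" using \<delta>_pos xA_nz eA_nz by (simp_all add: q_def)
  have in_A: "xs n \<in> A" "xA \<in> A" for n
    using subspace_0[OF subsp] A_def xA xs0 xsSuc[of "n - 1"] by (cases n; force simp: proj_set_def)+
  have recursion: "(norm (xA - xs (Suc n)))\<^sup>2 \<le> r * (norm (xA - xs n))\<^sup>2 + 4 / \<alpha> * (norm eA)\<^sup>2"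
    for n
    using ipa_step_error[OF bounded_linear.linear[OF lin] adj bilip \<alpha>_pos \<mu>_pos \<mu>1 in_A(1) xsSuc in_A(2)]
    by (simp add: r_def eA_def)
  have fixed_point: "r * (c * (norm eA)\<^sup>2) + 4 / \<alpha> * (norm eA)\<^sup>2 = c * (norm eA)\<^sup>2"
    by (metis c(2) distrib_right mult.assoc)
  have "(norm (xA - xs N))\<^sup>2 \<le> r ^ N * (norm xA)\<^sup>2 + c * (norm eA)\<^sup>2"
    using linear_recursion_bound[where d="\<lambda>n. (norm (xA - xs n))\<^sup>2", OF recursion]
      r c xs0 fixed_point by simp
  also have "\<dots> \<le> q\<^sup>2 * (norm xA)\<^sup>2 + c * (norm eA)\<^sup>2"
    using power_nat_ceiling_log_le[of r "q\<^sup>2"] r q by (simp add: N_def mult_right_mono)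
  also have "\<dots> = (\<delta> * norm eA)\<^sup>2 + (sqrt c * norm eA)\<^sup>2"
    using q(2)[symmetric] c(1) by (simp add: power_mult_distrib)
  also have "\<dots> \<le> ((sqrt c + \<delta>) * norm eA)\<^sup>2"
    using \<delta>_pos c by (simp add: power2_eq_square algebra_simps)
  finally have "norm (xA - xs N) \<le> (sqrt c + \<delta>) * norm eA"
    by (rule power2_le_imp_le) (use \<delta>_pos c(1) in simp)
  moreover have "norm (x - xs N) \<le> norm (xA - xs N) + norm (xA - x)"
    using norm_triangle_ineq4[of "xA - xs N" "xA - x"] by simp
  moreover have "N = nat \<lceil>2 * ln q / ln r\<rceil>" using q by (simp add: N_def ln_realpow)
  ultimately show ?thesis by (simp add: q_def r_def c_def)
qed

end
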